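(* Let $\mathcal{M}_i=(E_i,\rho_i)$, $i=1,2$, be $q$-matroids, let $\mathcal{F}_i$ and $\mathcal{Z}_i$ be the collections of flats and of cyclic flats of $\mathcal{M}_i$, and let $\rho$ be the rank function of $\mathcal{M}_1\oplus\mathcal{M}_2$ on $E=E_1\oplus E_2$. Then for all subspaces $V\le E$, \[ \rho(V)=\dim V+\min_{F_1\in\mathcal{F}_1,F_2\in\mathcal{F}_2}\big(\rho_1(F_1)+\rho_2(F_2)-\dim((F_1\oplus F_2)\cap V)\big) =\dim V+\min_{Z_1\in\mathcal{Z}_1,Z_2\in\mathcal{Z}_2}\big(\rho_1(Z_1)+\rho_2(Z_2)-\dim((Z_1\oplus Z_2)\cap V)\big). \]
   Context: Let $\mathbb{F}=\mathbb{F}_q$. A $q$-matroid is $\mathcal{M}=(E,\rho)$, $E$ a finite-dimensional $\mathbb{F}$-vector space, $\rho$ from subspaces to $\mathbb{Z}_{\ge0}$ with $0\le\rho(V)\le\dim V$, monotone and submodular. A flat is $F$ with $\rho(F+\langle x\rangle)>\rho(F)$ for all $x\notin F$. The cyclic core is $\mathrm{cyc}(V)=\{x\in V\mid\rho(W)=\rho(V)\text{ for all }W\le V\text{ with }W+\langle x\rangle=V\}$; $V$ is cyclic if $\mathrm{cyc}(V)=V$; a cyclic flat is a flat that is cyclic. Direct sum: for $E=E_1\oplus E_2$ (each $E_i$ identified with its image) with projections $\pi_i:E\to E_i$, $\mathcal{M}_1\oplus\mathcal{M}_2=(E,\rho)$ where $\rho(V)=\dim V+\min_{X\le V}(\rho_1(\pi_1(X))+\rho_2(\pi_2(X))-\dim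 X)$. *)

theory Defs
  imports Main "HOL.Vector_Spaces" "HOL-Library.Product_Plus"
begin

definition fin_dim :: "('f::field \<Rightarrow> 'v::ab_group_add \<Rightarrow> 'v) \<Rightarrow> bool" where
  "fin_dim s \<longleftrightarrow> (\<exists>B. finite B \<and> module.span s B = UNIV)"

definition qmatroid :: "('f::{field,finite} \<Rightarrow> 'v::ab_group_add \<Rightarrow> 'v) \<Rightarrow> ('v set \<Rightarrow> nat) \<Rightarrow> bool" where
  "qmatroid s rho \<longleftrightarrow> vector_space s \<and> fin_dim s \<and>
     (\<forall>V. module.subspace s V \<longrightarrow> rho V \<le> vector_space.dim s V) \<and>
     (\<forall>V W. module.subspace s V \<and> module.subspace s W \<and> V \<subseteq> W \<longrightarrow> rho V \<le> rho W) \<and>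
     (\<forall>V W. module.subspace s V \<and> module.subspace s W \<longrightarrow>
        rho (module.span s (V \<union> W)) + rho (V \<inter> W) \<le> rho V + rho W)"

definition qflat :: "('f::field \<Rightarrow> 'v::ab_group_add \<Rightarrow> 'v) \<Rightarrow> ('v set \<Rightarrow> nat) \<Rightarrow> 'v set \<Rightarrow> bool" where
  "qflat s rho F \<longleftrightarrow> module.subspace s F \<and>
     (\<forall>x. x \<notin> F \<longrightarrow> rho F < rho (module.span s (insert x F)))"

definition qcyc :: "('f::field \<Rightarrow> 'v::ab_group_add \<Rightarrow> 'v) \<Rightarrow> ('v set \<Rightarrow> nat) \<Rightarrow> 'v set \<Rightarrow> 'v set" where
  "qcyc s rho V = {x \<in> V. \<forall>W. module.subspace s W \<and> W \<subseteq> V \<and>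
       module.span s (insert x W) = V \<longrightarrow> rho W = rho V}"

definition qcyclic :: "('f::field \<Rightarrow> 'v::ab_group_add \<Rightarrow> 'v) \<Rightarrow> ('v set \<Rightarrow> nat) \<Rightarrow> 'v set \<Rightarrow> bool" where
  "qcyclic s rho V \<longleftrightarrow> qcyc s rho V = V"

definition qcyclic_flat :: "('f::field \<Rightarrow> 'v::ab_group_add \<Rightarrow> 'v) \<Rightarrow> ('v set \<Rightarrow> nat) \<Rightarrow> 'v set \<Rightarrow> bool" where
  "qcyclic_flat s rho F \<longleftrightarrow> qflat s rho F \<and> qcyclic s rho F"

text \<open>External direct sum E = E1 \<oplus> E2 realised as the product type; E1 is identified
  with its image {(x,0)}, E2 with {(0,y)}; the projections are fst and snd.\<close>
definition prod_scale :: "('f \<Rightarrow> 'a \<Rightarrow> 'a) \<Rightarrow> ('f \<Rightarrow> 'b \<Rightarrow> 'b) \<Rightarrow> 'f \<Rightarrow> 'a \<times> 'b \<Rightarrow> 'a \<times> 'b" where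
  "prod_scale s1 s2 c p = (s1 c (fst p), s2 c (snd p))"

definition qsum_rank ::
  "('f::field \<Rightarrow> 'a::ab_group_add \<Rightarrow> 'a) \<Rightarrow> ('a set \<Rightarrow> nat) \<Rightarrow>
   ('f \<Rightarrow> 'b::ab_group_add \<Rightarrow> 'b) \<Rightarrow> ('b set \<Rightarrow> nat) \<Rightarrow> ('a \<times> 'b) set \<Rightarrow> int" where
  "qsum_rank s1 rho1 s2 rho2 V =
     int (vector_space.dim (prod_scale s1 s2) V) +
     Min {int (rho1 (fst ` X)) + int (rho2 (snd ` X)) - int (vector_space.dim (prod_scale s1 s2) X)
          | X. module.subspace (prod_scale s1 s2) X \<and> X \<subseteq> V}"

end

theory Submission
  imports Defs "HOL-Library.FuncSet" "HOL-Analysis.Product_Vector"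
begin

(* The minimum defining the rank of the direct sum can be restricted to subspaces
   X = (F1 \<times> F2) \<inter> V with F1, F2 flats: replacing the projections of X by their closures keeps
   their ranks and only enlarges X.  Every flat F contains a cyclic flat Z with
   rho Z - dim Z \<le> rho F - dim F, and replacing F1 \<times> F2 by Z1 \<times> Z2 lowers the dimension of the
   intersection with V by at most the codimension of Z1 \<times> Z2 in F1 \<times> F2, so the minimum over
   pairs of flats is already attained on pairs of cyclic flats. *)

lemma Min_eq_if_mutually_dominated:
  fixes A B :: "'a::linorder set"
  assumes "finite A" "finite B" "B \<noteq> {}"
    and A_dominated: "\<And>a. a \<in> A \<Longrightarrow> \<exists>b\<in>B. b \<le> a"
    and B_dominated: "\<And>b. b \<in> B \<Longrightarrow> \<exists>a\<in>A. a \<le> b"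
  shows "Min A = Min B"
proof -
  obtain a where a: "a \<in> A" "a \<le> Min B"
    using B_dominated Min_in[OF \<open>finite B\<close> \<open>B \<noteq> {}\<close>] by blast
  then obtain b where b: "b \<in> B" "b \<le> Min A"
    using A_dominated Min_in[OF \<open>finite A\<close>] by blast
  have "Min A \<le> a" "Min B \<le> b"
    using a b \<open>finite A\<close> \<open>finite B\<close> by simp_all
  then show ?thesis
    using a b by simp
qed

lemma (in vector_space) finite_dimensional_if_fin_dim:
  assumes "fin_dim scale"
  obtains Basis where "finite_dimensional_vector_space scale Basis"
proof -
  obtain B where "finite B" "span B = UNIV"
    using assms unfolding fin_dim_def by blast
  moreover obtain C where "C \<subseteq> B" "independent C" "B \<subseteq> span C"
    using maximal_independent_subset[of B] by blast
  moreover have "span C = UNIV"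
    using \<open>span B = UNIV\<close> \<open>B \<subseteq> span C\<close> span_minimal[of B "span C"] by auto
  ultimately have "finite_dimensional_vector_space scale C"
    by unfold_locales (simp_all add: finite_subset)
  then show thesis
    by (rule that)
qed

lemma (in vector_space) qflat_UNIV: "qflat scale rho UNIV"
  unfolding qflat_def by simp

context finite_dimensional_vector_space
begin

lemma finite_vectors_if_finite_scalars:
  assumes "finite (UNIV :: 'a set)"
  shows "finite (UNIV :: 'b set)"
proof -
  have "UNIV \<subseteq> (\<lambda>u. \<Sum>v\<in>Basis. u v *s v) ` (Basis \<rightarrow>\<^sub>E UNIV)"
  proof
    fix x :: 'b
    obtain u where "x = (\<Sum>v\<in>Basis. u v *s v)"
      using span_finite[OF finite_Basis] span_Basis by auto
    also have "\<dots> = (\<Sum>v\<in>Basis. restrict u Basis v *s v)"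
      by simp
    finally show "x \<in> (\<lambda>u. \<Sum>v\<in>Basis. u v *s v) ` (Basis \<rightarrow>\<^sub>E UNIV)"
      by (intro image_eqI[of _ _ "restrict u Basis"]) auto
  qed
  moreover have "finite (Basis \<rightarrow>\<^sub>E (UNIV :: 'a set))"
    using finite_Basis assms by (rule finite_PiE)
  ultimately show ?thesis
    using finite_subset by blast
qed

lemma finite_set_family_if_finite_scalars:
  assumes "finite (UNIV :: 'a set)"
  shows "finite (\<S> :: 'b set set)"
proof (rule finite_subset[OF subset_UNIV])
  show "finite (UNIV :: 'b set set)"
    using finite_vectors_if_finite_scalars[OF assms] by (simp only: Finite_Set.finite_set)
qed

lemma dim_span_insert: "subspace S \<Longrightarrow> x \<notin> S \<Longrightarrow> dim (span (insert x S)) = dim S + 1"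
  by (simp add: dim_insert span_eq_iff[THEN iffD2])

lemma dim_Int_add_le:
  assumes "subspace A" "subspace B" "A \<subseteq> B" "subspace V"
  shows "dim (B \<inter> V) + dim A \<le> dim (A \<inter> V) + dim B"
proof -
  let ?S = "{x + y |x y. x \<in> B \<inter> V \<and> y \<in> A}"
  have "dim ?S + dim (B \<inter> V \<inter> A) = dim (B \<inter> V) + dim A"
    using assms by (intro dim_sums_Int subspace_inter)
  moreover have "B \<inter> V \<inter> A = A \<inter> V"
    using \<open>A \<subseteq> B\<close> by blast
  ultimately have "dim ?S + dim (A \<inter> V) = dim (B \<inter> V) + dim A"
    by simp
  moreover have "dim ?S \<le> dim B"
    using assms by (intro dim_subset) (blast intro: subspace_add)
  ultimately show ?thesis
    by linarith
qed

end

locale finite_qmatroid = finite_dimensional_vector_space scale Basis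
  for scale :: "'f::{field,finite} \<Rightarrow> 'v::ab_group_add \<Rightarrow> 'v" and Basis :: "'v set" +
  fixes rho :: "'v set \<Rightarrow> nat"
  assumes qmatroid: "qmatroid scale rho"
begin

lemma rank_mono: "subspace V \<Longrightarrow> subspace W \<Longrightarrow> V \<subseteq> W \<Longrightarrow> rho V \<le> rho W"
  using qmatroid unfolding qmatroid_def by blast

lemma rank_submodular:
  "subspace V \<Longrightarrow> subspace W \<Longrightarrow> rho (span (V \<union> W)) + rho (V \<inter> W) \<le> rho V + rho W"
  using qmatroid unfolding qmatroid_def by blast

lemmas finite_set_family = finite_set_family_if_finite_scalars[OF finite_UNIV]

lemma exists_qflat_closure:
  assumes "subspace A"
  obtains F where "qflat scale rho F" "A \<subseteq> F" "rho F = rho A"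
proof -
  let ?S = "{W. subspace W \<and> A \<subseteq> W \<and> rho W = rho A}"
  have "A \<in> ?S"
    using assms by blast
  then obtain F where F: "subspace F" "A \<subseteq> F" "rho F = rho A"
    and F_maximal: "\<forall>W\<in>?S. F \<subseteq> W \<longrightarrow> F = W"
    using finite_has_maximal[OF finite_set_family, of ?S] by blast
  have "rho F < rho (span (insert x F))" if "x \<notin> F" for x
  proof -
    let ?G = "span (insert x F)"
    have "F \<subseteq> ?G" "F \<noteq> ?G"
      using that span_superset[of "insert x F"] by auto
    then have "rho ?G \<noteq> rho A"
      using F_maximal F(2) by auto
    moreover have "rho F \<le> rho ?G"
      using F(1) \<open>F \<subseteq> ?G\<close> by (intro rank_mono) auto
    ultimately show ?thesis
      using F(3) by simp
  qed
  then have "qflat scale rho F"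
    using F(1) unfolding qflat_def by blast
  from this F(2,3) show thesis
    by (rule that)
qed

lemma rank_less_span_insert_if_qflat:
  assumes "qflat scale rho F" "subspace Z" "Z \<subseteq> F" "x \<notin> F"
  shows "rho Z < rho (span (insert x Z))"
proof -
  let ?Z' = "span (insert x Z)"
  have F: "subspace F" "rho F < rho (span (insert x F))"
    using assms(1,4) unfolding qflat_def by auto
  have "F \<union> ?Z' \<subseteq> span (insert x F)"
    using \<open>Z \<subseteq> F\<close> span_superset[of "insert x F"] span_mono[of "insert x Z" "insert x F"] by blast
  moreover have "insert x F \<subseteq> span (F \<union> ?Z')"
    using span_superset[of "F \<union> ?Z'"] span_superset[of "insert x Z"] by blast
  ultimately have "span (F \<union> ?Z') = span (insert x F)"
    by (simp add: span_eq)
  then have "rho (span (insert x F)) + rho (F \<inter> ?Z') \<le> rho F + rho ?Z'"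
    using rank_submodular[OF F(1) subspace_span, of "insert x Z"] by simp
  moreover have "rho Z \<le> rho (F \<inter> ?Z')"
    using assms(2,3) F span_superset[of "insert x Z"] by (intro rank_mono subspace_inter) auto
  ultimately show ?thesis
    using F(2) by linarith
qed

lemma qcyclic_if_hyperplanes_full_rank:
  assumes "subspace Z"
    and hyperplanes: "\<And>W. subspace W \<Longrightarrow> W \<subseteq> Z \<Longrightarrow> dim Z = dim W + 1 \<Longrightarrow> rho W = rho Z"
  shows "qcyclic scale rho Z"
  unfolding qcyclic_def qcyc_def
proof (intro subset_antisym subsetI CollectI conjI allI impI)
  fix x W assume "x \<in> Z" and W: "subspace W \<and> W \<subseteq> Z \<and> span (insert x W) = Z"
  show "rho W = rho Z"
  proof (cases "x \<in> W")
    case True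
    then have "Z = W"
      using W span_redundant[OF span_base[OF True]] span_eq_iff[of W] by simp
    then show ?thesis
      by simp
  next
    case False
    then show ?thesis
      using W dim_span_insert[of W x] by (intro hyperplanes) auto
  qed
qed auto

text \<open>The cyclic flat is a subspace of \<open>F\<close> minimising \<open>rho - dim\<close>, chosen minimal under
  inclusion among the minimisers: minimality of \<open>rho - dim\<close> makes it a flat, minimality under
  inclusion forbids hyperplanes of smaller rank.\<close>
lemma exists_qcyclic_flat_below:
  assumes "qflat scale rho F"
  obtains Z where "qcyclic_flat scale rho Z" "Z \<subseteq> F"
    "int (rho Z) - int (dim Z) \<le> int (rho F) - int (dim F)"
proof -
  define excess where "excess W = int (rho W) - int (dim W)" for W
  let ?S = "{W. subspace W \<and> W \<subseteq> F}"
  have F: "subspace F" "F \<in> ?S"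
    using assms unfolding qflat_def by auto
  define m where "m = Min (excess ` ?S)"
  have m_le: "m \<le> excess W" if "W \<in> ?S" for W
    unfolding m_def using that finite_set_family by (intro Min_le finite_imageI) auto
  have "m \<in> excess ` ?S"
    unfolding m_def using F(2) finite_set_family by (intro Min_in finite_imageI) auto
  then have "{W \<in> ?S. excess W = m} \<noteq> {}"
    by auto
  then obtain Z where "Z \<in> {W \<in> ?S. excess W = m}"
    and Z_minimal: "\<forall>W \<in> {W \<in> ?S. excess W = m}. W \<subseteq> Z \<longrightarrow> Z = W"
    using finite_has_minimal[OF finite_set_family] by meson
  then have Z: "subspace Z" "Z \<subseteq> F" "excess Z = m"
    by auto
  have "qcyclic scale rho Z"
  proof (rule qcyclic_if_hyperplanes_full_rank[OF Z(1)])
    fix W assume W: "subspace W" "W \<subseteq> Z" "dim Z = dim W + 1"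
    show "rho W = rho Z"
    proof (rule ccontr)
      assume "rho W \<noteq> rho Z"
      then have "rho W < rho Z"
        using rank_mono[OF W(1) Z(1) W(2)] by simp
      then have "excess W \<le> m"
        using W(3) Z(3) unfolding excess_def by simp
      moreover have "W \<in> ?S"
        using W Z by auto
      ultimately have "W \<in> {W \<in> ?S. excess W = m}"
        using m_le[of W] by simp
      then have "Z = W"
        using Z_minimal W(2) by blast
      then show False
        using W(3) by simp
    qed
  qed
  moreover have "qflat scale rho Z"
    unfolding qflat_def
  proof (intro conjI allI impI)
    fix x assume "x \<notin> Z"
    show "rho Z < rho (span (insert x Z))"
    proof (cases "x \<in> F")
      case True
      then have "span (insert x Z) \<subseteq> F"
        using Z F(1) by (intro span_minimal) auto
      then have "span (insert x Z) \<in> ?S"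
        by simp
      then have "m \<le> excess (span (insert x Z))"
        by (rule m_le)
      then show ?thesis
        using Z(3) dim_span_insert[OF Z(1) \<open>x \<notin> Z\<close>] unfolding excess_def by simp
    next
      case False
      then show ?thesis
        using rank_less_span_insert_if_qflat[OF assms Z(1,2)] by blast
    qed
  qed (rule Z(1))
  moreover have "excess Z \<le> excess F"
    using Z(3) m_le[OF F(2)] by simp
  ultimately show thesis
    using Z(2) unfolding excess_def by (intro that) (simp_all add: qcyclic_flat_def)
qed

end

locale qmatroid_pair =
  M1: finite_qmatroid s1 B1 rho1 + M2: finite_qmatroid s2 B2 rho2
  for s1 :: "'f::{field,finite} \<Rightarrow> 'a::ab_group_add \<Rightarrow> 'a" and B1 rho1
    and s2 :: "'f \<Rightarrow> 'b::ab_group_add \<Rightarrow> 'b" and B2 rho2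
begin

sublocale finite_dimensional_vector_space_prod s1 s2 B1 B2 ..

lemma prod_scale_eq_scale: "prod_scale s1 s2 = scale"
  by (simp add: fun_eq_iff prod_scale_def scale_def)

sublocale fst: Vector_Spaces.linear scale s1 fst
  by (rule linear_fst)

sublocale snd: Vector_Spaces.linear scale s2 snd
  by (rule linear_snd)

abbreviation proj_bound :: "('a \<times> 'b) set \<Rightarrow> int" where
  "proj_bound X \<equiv> int (rho1 (fst ` X)) + int (rho2 (snd ` X)) - int (p.dim X)"

abbreviation pair_bound :: "('a \<times> 'b) set \<Rightarrow> 'a set \<Rightarrow> 'b set \<Rightarrow> int" where
  "pair_bound V F1 F2 \<equiv> int (rho1 F1) + int (rho2 F2) - int (p.dim ((F1 \<times> F2) \<inter> V))"

lemma Min_proj_bound_eq_Min_qflat_pair_bound: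
  assumes "p.subspace V"
  shows "Min {proj_bound X | X. p.subspace X \<and> X \<subseteq> V}
       = Min {pair_bound V F1 F2 | F1 F2. qflat s1 rho1 F1 \<and> qflat s2 rho2 F2}"
proof (rule Min_eq_if_mutually_dominated)
  show "finite {proj_bound X | X. p.subspace X \<and> X \<subseteq> V}"
    by (rule finite_image_set[OF p.finite_set_family_if_finite_scalars[OF finite_UNIV]])
  show "finite {pair_bound V F1 F2 | F1 F2. qflat s1 rho1 F1 \<and> qflat s2 rho2 F2}"
    by (rule finite_image_set2[OF M1.finite_set_family M2.finite_set_family])
  show "{pair_bound V F1 F2 | F1 F2. qflat s1 rho1 F1 \<and> qflat s2 rho2 F2} \<noteq> {}"
    using M1.qflat_UNIV M2.qflat_UNIV by blast
next
  fix a assume "a \<in> {proj_bound X | X. p.subspace X \<and> X \<subseteq> V}"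
  then obtain X where a: "a = proj_bound X" and X: "p.subspace X" "X \<subseteq> V"
    by blast
  obtain F1 where F1: "qflat s1 rho1 F1" "fst ` X \<subseteq> F1" "rho1 F1 = rho1 (fst ` X)"
    using M1.exists_qflat_closure[OF fst.subspace_image[OF X(1)]] .
  obtain F2 where F2: "qflat s2 rho2 F2" "snd ` X \<subseteq> F2" "rho2 F2 = rho2 (snd ` X)"
    using M2.exists_qflat_closure[OF snd.subspace_image[OF X(1)]] .
  have "X \<subseteq> (F1 \<times> F2) \<inter> V"
    using X(2) F1(2) F2(2) by force
  then have "p.dim X \<le> p.dim ((F1 \<times> F2) \<inter> V)"
    by (rule p.dim_subset)
  then show "\<exists>b \<in> {pair_bound V F1 F2 | F1 F2. qflat s1 rho1 F1 \<and> qflat s2 rho2 F2}. b \<le> a"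
    using a F1 F2 by fastforce
next
  fix b assume "b \<in> {pair_bound V F1 F2 | F1 F2. qflat s1 rho1 F1 \<and> qflat s2 rho2 F2}"
  then obtain F1 F2 where b: "b = pair_bound V F1 F2" and F: "qflat s1 rho1 F1" "qflat s2 rho2 F2"
    by blast
  let ?X = "(F1 \<times> F2) \<inter> V"
  have F_subspace: "M1.subspace F1" "M2.subspace F2"
    using F unfolding qflat_def by auto
  then have X: "p.subspace ?X"
    using assms by (intro p.subspace_inter subspace_Times)
  have "rho1 (fst ` ?X) \<le> rho1 F1" "rho2 (snd ` ?X) \<le> rho2 F2"
    using F_subspace X by (auto intro!: M1.rank_mono M2.rank_mono fst.subspace_image snd.subspace_image)
  then show "\<exists>a \<in> {proj_bound X | X. p.subspace X \<and> X \<subseteq> V}. a \<le> b"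
    using b X by fastforce
qed

lemma Min_qcyclic_flat_pair_bound_eq_Min_qflat_pair_bound:
  assumes "p.subspace V"
  shows "Min {pair_bound V Z1 Z2 | Z1 Z2. qcyclic_flat s1 rho1 Z1 \<and> qcyclic_flat s2 rho2 Z2}
       = Min {pair_bound V F1 F2 | F1 F2. qflat s1 rho1 F1 \<and> qflat s2 rho2 F2}"
proof (rule Min_eq_if_mutually_dominated)
  show "finite {pair_bound V Z1 Z2 | Z1 Z2. qcyclic_flat s1 rho1 Z1 \<and> qcyclic_flat s2 rho2 Z2}"
    by (rule finite_image_set2[OF M1.finite_set_family M2.finite_set_family])
  show "finite {pair_bound V F1 F2 | F1 F2. qflat s1 rho1 F1 \<and> qflat s2 rho2 F2}"
    by (rule finite_image_set2[OF M1.finite_set_family M2.finite_set_family])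
  show "{pair_bound V F1 F2 | F1 F2. qflat s1 rho1 F1 \<and> qflat s2 rho2 F2} \<noteq> {}"
    using M1.qflat_UNIV M2.qflat_UNIV by blast
next
  fix a assume "a \<in> {pair_bound V Z1 Z2 | Z1 Z2. qcyclic_flat s1 rho1 Z1 \<and> qcyclic_flat s2 rho2 Z2}"
  then show "\<exists>b \<in> {pair_bound V F1 F2 | F1 F2. qflat s1 rho1 F1 \<and> qflat s2 rho2 F2}. b \<le> a"
    unfolding qcyclic_flat_def by blast
next
  fix b assume "b \<in> {pair_bound V F1 F2 | F1 F2. qflat s1 rho1 F1 \<and> qflat s2 rho2 F2}"
  then obtain F1 F2 where b: "b = pair_bound V F1 F2" and F: "qflat s1 rho1 F1" "qflat s2 rho2 F2"
    by blast
  obtain Z1 where Z1: "qcyclic_flat s1 rho1 Z1" "Z1 \<subseteq> F1"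
    "int (rho1 Z1) - int (M1.dim Z1) \<le> int (rho1 F1) - int (M1.dim F1)"
    using M1.exists_qcyclic_flat_below[OF F(1)] .
  obtain Z2 where Z2: "qcyclic_flat s2 rho2 Z2" "Z2 \<subseteq> F2"
    "int (rho2 Z2) - int (M2.dim Z2) \<le> int (rho2 F2) - int (M2.dim F2)"
    using M2.exists_qcyclic_flat_below[OF F(2)] .
  have subspaces: "M1.subspace F1" "M2.subspace F2" "M1.subspace Z1" "M2.subspace Z2"
    using F Z1(1) Z2(1) unfolding qcyclic_flat_def qflat_def by auto
  have "p.dim ((F1 \<times> F2) \<inter> V) + p.dim (Z1 \<times> Z2) \<le> p.dim ((Z1 \<times> Z2) \<inter> V) + p.dim (F1 \<times> F2)"
    using subspaces Z1(2) Z2(2) assms by (intro p.dim_Int_add_le subspace_Times) auto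
  then have "pair_bound V Z1 Z2 \<le> b"
    using b Z1(3) Z2(3) subspaces by (simp add: dim_Times)
  then show "\<exists>a \<in> {pair_bound V Z1 Z2 | Z1 Z2. qcyclic_flat s1 rho1 Z1 \<and> qcyclic_flat s2 rho2 Z2}. a \<le> b"
    using Z1(1) Z2(1) by blast
qed

end

theorem theorem5p8:
  fixes s1 :: "'f::{field,finite} \<Rightarrow> 'a::ab_group_add \<Rightarrow> 'a"
    and s2 :: "'f \<Rightarrow> 'b::ab_group_add \<Rightarrow> 'b"
    and rho1 :: "'a set \<Rightarrow> nat" and rho2 :: "'b set \<Rightarrow> nat"
    and V :: "('a \<times> 'b) set"
  assumes "qmatroid s1 rho1" and "qmatroid s2 rho2"
    and "module.subspace (prod_scale s1 s2) V"
  shows "qsum_rank s1 rho1 s2 rho2 V =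
           int (vector_space.dim (prod_scale s1 s2) V) +
           Min {int (rho1 F1) + int (rho2 F2) - int (vector_space.dim (prod_scale s1 s2) ((F1 \<times> F2) \<inter> V))
                | F1 F2. qflat s1 rho1 F1 \<and> qflat s2 rho2 F2}
       \<and> qsum_rank s1 rho1 s2 rho2 V =
           int (vector_space.dim (prod_scale s1 s2) V) +
           Min {int (rho1 Z1) + int (rho2 Z2) - int (vector_space.dim (prod_scale s1 s2) ((Z1 \<times> Z2) \<inter> V))
                | Z1 Z2. qcyclic_flat s1 rho1 Z1 \<and> qcyclic_flat s2 rho2 Z2}"
proof -
  obtain B1 where "finite_dimensional_vector_space s1 B1"
    using assms(1) vector_space.finite_dimensional_if_fin_dim unfolding qmatroid_def by meson
  moreover obtain B2 where "finite_dimensional_vector_space s2 B2"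
    using assms(2) vector_space.finite_dimensional_if_fin_dim unfolding qmatroid_def by meson
  ultimately interpret qmatroid_pair s1 B1 rho1 s2 B2 rho2
    using assms(1,2) by (intro qmatroid_pair.intro finite_qmatroid.intro finite_qmatroid_axioms.intro)
  have V: "p.subspace V"
    using assms(3) by (simp only: prod_scale_eq_scale)
  show ?thesis
    unfolding qsum_rank_def prod_scale_eq_scale Min_proj_bound_eq_Min_qflat_pair_bound[OF V]
      Min_qcyclic_flat_pair_bound_eq_Min_qflat_pair_bound[OF V]
    by simp
qed

end
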